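(* Let $c\in\mathbb{R}\setminus\{0\}$ and let $\mathbf f_c:\mathbb{R}^2\to\mathbb{R}^2$ be $$\mathbf f_c(u,v)=\bigl(3v^2-3u^2-2cu,\ 6uv-2cv\bigr).$$ Let $\mathbf s=(s_1,s_2)$ be a point such that $\mathbf f_c(\mathbf x)=\mathbf s$ has exactly four distinct solutions $\mathbf x_i=(u_i,v_i)\in\mathbb{R}^2$, $i=1,\dots,4$, each with $\det(\mathrm{Jac}\,\mathbf f_c)(\mathbf x_i)\neq0$. Then, with $\mathfrak M_i=1/\det(\mathrm{Jac}\,\mathbf f_c)(\mathbf x_i)=\frac{1}{4c^2-36(u_i^2+v_i^2)}$, $$\mathfrak M_1+\mathfrak M_2+\mathfrak M_3+\mathfrak M_4=0.$$
   Context: $\mathbf f_c$ is the generic local form of a one-parameter family of maps between planes near an elliptic umbilic singularity; it is induced by the family of functions $F_{c,\mathbf s}(u,v)=s_1u+s_2v+c(u^2+v^2)+u^3-3uv^2$. The points $\mathbf s$ with four preimages form the four-image region bounded by the (three-cusped) caustic of $\mathbf f_c$. *)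

theory Defs
  imports "HOL-Analysis.Analysis"
begin

definition fc :: "real \<Rightarrow> real \<times> real \<Rightarrow> real \<times> real" where
  "fc c x = (let u = fst x; v = snd x in
     (3 * v^2 - 3 * u^2 - 2 * c * u, 6 * u * v - 2 * c * v))"

text \<open>Determinant of the Jacobian matrix of f_c at (u,v), written via its
  partial derivatives: d1/du = -6u-2c, d1/dv = 6v, d2/du = 6v, d2/dv = 6u-2c.\<close>
definition jac_det_fc :: "real \<Rightarrow> real \<times> real \<Rightarrow> real" where
  "jac_det_fc c x = (let u = fst x; v = snd x in
     (-6 * u - 2 * c) * (6 * u - 2 * c) - (6 * v) * (6 * v))"

end

theory Submission
  imports Defs
begin

(* Identify the plane with C via z = u + i v and put S = s1 + i s2.
   In complex form f_c(x) = -3 (conj z)^2 - 2 c z, so f_c(x) = s means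
   S = -3 (conj z)^2 - 2 c z and conj S = -3 z^2 - 2 c (conj z); eliminating
   conj z with the second equation shows that every solution is a root of
     p(z) = 27 z^4 + 18 (conj S) z^2 + 8 c^3 z + 3 (conj S)^2 + 4 c^2 S,
   and a direct computation gives p'(z) = 2 c det(Jac f_c)(x).
   If f_c(x) = s has four distinct solutions, their complex coordinates are the
   four roots of p, so p'(z_i) = 27 prod_(j<>i) (z_i - z_j).  Hence each M_i equals
   (2c/27) / prod_(j<>i) (z_i - z_j), and the claim follows from the Lagrange
   identity  sum_i 1 / prod_(j<>i) (z_i - z_j) = 0  for four distinct points. *)

lemma lagrange_identity_four:
  fixes a b c d :: "'a :: field"
  assumes "distinct [a, b, c, d]"
  shows "1/((a-b)*(a-c)*(a-d)) + 1/((b-a)*(b-c)*(b-d))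
       + 1/((c-a)*(c-b)*(c-d)) + 1/((d-a)*(d-b)*(d-c)) = 0"
proof -
  have nonzero: "a-b \<noteq> 0" "a-c \<noteq> 0" "a-d \<noteq> 0" "b-c \<noteq> 0" "b-d \<noteq> 0" "c-d \<noteq> 0"
    "b-a \<noteq> 0" "c-a \<noteq> 0" "d-a \<noteq> 0" "c-b \<noteq> 0" "d-b \<noteq> 0" "d-c \<noteq> 0"
    using assms by auto
  have "1/((a-b)*(a-c)*(a-d)) + 1/((b-a)*(b-c)*(b-d))
       + 1/((c-a)*(c-b)*(c-d)) + 1/((d-a)*(d-b)*(d-c))
     = ((b-c)*(b-d)*(c-d) - (a-c)*(a-d)*(c-d) + (a-b)*(a-d)*(b-d) - (a-b)*(a-c)*(b-c))
       / ((a-b)*(a-c)*(a-d)*(b-c)*(b-d)*(c-d))"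
    using nonzero by (simp add: divide_simps) (simp add: algebra_simps)
  also have "(b-c)*(b-d)*(c-d) - (a-c)*(a-d)*(c-d) + (a-b)*(a-d)*(b-d) - (a-b)*(a-c)*(b-c) = 0"
    by (simp add: algebra_simps)
  finally show ?thesis by simp
qed

text \<open>The proof uses divided differences: they vanish on roots, and the third one
  is a (z1+z2+z3+z4) + b; solving for b, c, d gives the claim.\<close>
lemma quartic_deriv_at_root:
  fixes a b c d e z1 z2 z3 z4 :: "'a :: idom"
  defines "p \<equiv> \<lambda>z. a*z^4 + b*z^3 + c*z^2 + d*z + e"
  assumes distinct: "distinct [z1, z2, z3, z4]"
    and roots: "p z1 = 0" "p z2 = 0" "p z3 = 0" "p z4 = 0"
  shows "4*a*z1^3 + 3*b*z1^2 + 2*c*z1 + d = a * ((z1-z2)*(z1-z3)*(z1-z4))"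
proof -
  define dd1 where "dd1 x y = a*(x^3+x^2*y+x*y^2+y^3) + b*(x^2+x*y+y^2) + c*(x+y) + d" for x y
  define dd2 where "dd2 x y w = a*(x^2+y^2+w^2+x*y+x*w+y*w) + b*(x+y+w) + c" for x y w
  have dd1_root: "dd1 x y = 0" if "x \<noteq> y" "p x = 0" "p y = 0" for x y
  proof -
    have "(x - y) * dd1 x y = p x - p y"
      unfolding p_def dd1_def
      by (simp add: algebra_simps power2_eq_square power3_eq_cube power4_eq_xxxx)
    with that show ?thesis by simp
  qed
  have dd2_root: "dd2 x y w = 0" if "y \<noteq> w" "dd1 x y = 0" "dd1 x w = 0" for x y w
  proof -
    have "(y - w) * dd2 x y w = dd1 x y - dd1 x w"
      unfolding dd1_def dd2_def by (simp add: algebra_simps power2_eq_square power3_eq_cube)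
    with that show ?thesis by simp
  qed
  have dd3_root: "a*(z1+z2+z3+z4) + b = 0"
  proof -
    have "(z3 - z4) * (a*(z1+z2+z3+z4) + b) = dd2 z1 z2 z3 - dd2 z1 z2 z4"
      unfolding dd2_def by (simp add: algebra_simps power2_eq_square)
    with distinct dd2_root dd1_root roots show ?thesis by simp
  qed
  have "dd2 z1 z2 z3 = 0" "dd1 z1 z2 = 0"
    using distinct dd2_root dd1_root roots by simp_all
  then have c: "c = - a*(z1^2+z2^2+z3^2+z1*z2+z1*z3+z2*z3) - b*(z1+z2+z3)"
    and d: "d = - a*(z1^3+z1^2*z2+z1*z2^2+z2^3) - b*(z1^2+z1*z2+z2^2) - c*(z1+z2)"
    unfolding dd1_def dd2_def by (simp_all add: eq_neg_iff_add_eq_0 algebra_simps)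
  have b: "b = - a*(z1+z2+z3+z4)"
    using dd3_root by (simp add: eq_neg_iff_add_eq_0 algebra_simps)
  show ?thesis unfolding d c b by (simp add: algebra_simps power2_eq_square power3_eq_cube)
qed

definition cpx :: "real \<times> real \<Rightarrow> complex" where
  "cpx x = Complex (fst x) (snd x)"

lemma cpx_inj: "cpx x = cpx y \<longleftrightarrow> x = y"
  by (auto simp: cpx_def prod_eq_iff)

text \<open>Complex form of f_c: the solutions of f_c(x) = s are roots of a quartic
  with vanishing cubic term, and its derivative there is 2 c times the Jacobian.
  Both are written with all coefficients explicit, in the shape used by
  quartic_deriv_at_root.\<close>
lemma fc_solution_quartic:
  fixes c :: real
  assumes "fc c x = s"
  defines "z \<equiv> cpx x" and "S \<equiv> cpx s"
  shows "27*z^4 + 0*z^3 + (18*cnj S)*z^2 + (8 * of_real c^3)*z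
           + (3*(cnj S)^2 + 4 * of_real c^2*S) = 0"
    and "4*27*z^3 + 3*0*z^2 + 2*(18*cnj S)*z + 8 * of_real c^3
           = 2 * of_real c * of_real (jac_det_fc c x)"
proof -
  obtain u v where x: "x = (u, v)" by (cases x)
  have s: "s = (3 * v^2 - 3 * u^2 - 2 * c * u, 6 * u * v - 2 * c * v)"
    using assms(1) unfolding fc_def x by simp
  show "27*z^4 + 0*z^3 + (18*cnj S)*z^2 + (8 * of_real c^3)*z
          + (3*(cnj S)^2 + 4 * of_real c^2*S) = 0"
    unfolding z_def S_def cpx_def s x
    by (simp add: complex_eq_iff power2_eq_square power3_eq_cube power4_eq_xxxx algebra_simps)
  show "4*27*z^3 + 3*0*z^2 + 2*(18*cnj S)*z + 8 * of_real c^3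
          = 2 * of_real c * of_real (jac_det_fc c x)"
    unfolding z_def S_def cpx_def s x jac_det_fc_def
    by (simp add: complex_eq_iff power2_eq_square power3_eq_cube algebra_simps)
qed

lemma recip_jacobian_at_solution:
  fixes c :: real
  assumes "c \<noteq> 0" and "distinct [x1, x2, x3, x4]"
    and "fc c x1 = s" "fc c x2 = s" "fc c x3 = s" "fc c x4 = s"
    and "jac_det_fc c x1 \<noteq> 0"
  shows "complex_of_real (1 / jac_det_fc c x1)
       = (2 * of_real c / 27) / ((cpx x1 - cpx x2) * (cpx x1 - cpx x3) * (cpx x1 - cpx x4))"
proof -
  have "distinct [cpx x1, cpx x2, cpx x3, cpx x4]"
    using assms(2) by (simp add: cpx_inj)
  from quartic_deriv_at_root[OF this fc_solution_quartic(1)[OF assms(3)]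
      fc_solution_quartic(1)[OF assms(4)] fc_solution_quartic(1)[OF assms(5)]
      fc_solution_quartic(1)[OF assms(6)]]
  have "2 * of_real c * of_real (jac_det_fc c x1)
      = 27 * ((cpx x1 - cpx x2) * (cpx x1 - cpx x3) * (cpx x1 - cpx x4))"
    unfolding fc_solution_quartic(2)[OF assms(3)] by simp
  with assms(1) have "complex_of_real (jac_det_fc c x1)
      = 27 * ((cpx x1 - cpx x2) * (cpx x1 - cpx x3) * (cpx x1 - cpx x4)) / (2 * of_real c)"
    by (simp add: eq_divide_eq mult.commute)
  then show ?thesis by simp
qed

lemma card_4_distinct:
  assumes "card X = 4"
  obtains x1 x2 x3 x4 where "X = {x1, x2, x3, x4}" "distinct [x1, x2, x3, x4]"
proof -
  have "card X = Suc 3" using assms by simp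
  then obtain x1 B where X: "X = insert x1 B" "x1 \<notin> B" "card B = 3"
    unfolding card_Suc_eq by blast
  then obtain x2 x3 x4 where "B = {x2, x3, x4}" "x2 \<noteq> x3" "x3 \<noteq> x4" "x2 \<noteq> x4"
    unfolding card_3_iff by blast
  with X show ?thesis by (intro that) auto
qed

theorem theorem1:
  fixes c :: real and s :: "real \<times> real"
  assumes "c \<noteq> 0"
    and "finite {x. fc c x = s}" and "card {x. fc c x = s} = 4"
    and "\<forall>x\<in>{x. fc c x = s}. jac_det_fc c x \<noteq> 0"
  shows "(\<Sum>x\<in>{x. fc c x = s}. 1 / jac_det_fc c x) = 0"
proof -
  obtain x1 x2 x3 x4 where X: "{x. fc c x = s} = {x1, x2, x3, x4}"
    and dist: "distinct [x1, x2, x3, x4]"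
    using card_4_distinct[OF assms(3)] by blast
  have sol: "fc c x1 = s" "fc c x2 = s" "fc c x3 = s" "fc c x4 = s"
    and jac: "jac_det_fc c x1 \<noteq> 0" "jac_det_fc c x2 \<noteq> 0"
             "jac_det_fc c x3 \<noteq> 0" "jac_det_fc c x4 \<noteq> 0"
    using X assms(4) by blast+
  let ?z1 = "cpx x1" and ?z2 = "cpx x2" and ?z3 = "cpx x3" and ?z4 = "cpx x4"
  have M1: "complex_of_real (1 / jac_det_fc c x1)
      = (2 * of_real c / 27) / ((?z1-?z2)*(?z1-?z3)*(?z1-?z4))"
    by (rule recip_jacobian_at_solution) (use assms(1) dist sol jac in auto)
  have M2: "complex_of_real (1 / jac_det_fc c x2)
      = (2 * of_real c / 27) / ((?z2-?z1)*(?z2-?z3)*(?z2-?z4))"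
    by (rule recip_jacobian_at_solution) (use assms(1) dist sol jac in auto)
  have M3: "complex_of_real (1 / jac_det_fc c x3)
      = (2 * of_real c / 27) / ((?z3-?z1)*(?z3-?z2)*(?z3-?z4))"
    by (rule recip_jacobian_at_solution) (use assms(1) dist sol jac in auto)
  have M4: "complex_of_real (1 / jac_det_fc c x4)
      = (2 * of_real c / 27) / ((?z4-?z1)*(?z4-?z2)*(?z4-?z3))"
    by (rule recip_jacobian_at_solution) (use assms(1) dist sol jac in auto)
  have "complex_of_real (\<Sum>x\<in>{x1, x2, x3, x4}. 1 / jac_det_fc c x)
      = (2 * of_real c / 27) * (1/((?z1-?z2)*(?z1-?z3)*(?z1-?z4)) + 1/((?z2-?z1)*(?z2-?z3)*(?z2-?z4))
                  + 1/((?z3-?z1)*(?z3-?z2)*(?z3-?z4)) + 1/((?z4-?z1)*(?z4-?z2)*(?z4-?z3)))"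
    using dist by (simp add: M1 M2 M3 M4 distrib_left add.assoc del: of_real_divide of_real_1)
  also have "\<dots> = 0"
    using dist by (simp add: cpx_inj lagrange_identity_four)
  finally show ?thesis unfolding X by (simp only: of_real_eq_0_iff)
qed

end
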